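(* There exists a topologically mixing shift space $X$ over the alphabet $\{0,1\}$ with exactly two ergodic $\sigma$-invariant measures $\mu_1,\mu_2$ such that every point $x\in X$ is generic for $\mu_1$ or for $\mu_2$. In particular, for every $\lambda\in(0,1)$ the invariant measure $\lambda\mu_1+(1-\lambda)\mu_2$ has no generic point.
   Context: A shift space is a closed $\sigma$-invariant subset of $\{0,1\}^{\mathbb N}$ (product topology), $\sigma$ the left shift. It is topologically mixing if for every two nonempty open sets $U,V$ there is $N$ such that $U\cap\sigma^{-n}V\ne\emptyset$ for all $n\ge N$. $x$ is generic for an invariant measure $\mu$ if $\frac1n\sum_{j<n}\delta_{\sigma^jx}\to\mu$ in the weak$*$ topology. *)

theory Defs
  imports "HOL-Analysis.Analysis" "HOL-Probability.Probability"
begin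

text \<open>Points of the full shift over the alphabet \<open>{0,1}\<close>, encoded as \<open>bool\<close>;
  \<open>nat \<Rightarrow> bool\<close> carries the product topology (bool is discrete).\<close>

definition shift :: "(nat \<Rightarrow> bool) \<Rightarrow> (nat \<Rightarrow> bool)" where
  "shift x = (\<lambda>n. x (Suc n))"

definition shift_space :: "(nat \<Rightarrow> bool) set \<Rightarrow> bool" where
  "shift_space X \<longleftrightarrow> closed X \<and> shift ` X \<subseteq> X"

definition topologically_mixing :: "(nat \<Rightarrow> bool) set \<Rightarrow> bool" where
  "topologically_mixing X \<longleftrightarrow>
     (\<forall>U V. openin (top_of_set X) U \<and> U \<noteq> {} \<and> openin (top_of_set X) V \<and> V \<noteq> {} \<longrightarrow>
        (\<exists>N. \<forall>n\<ge>N. U \<inter> (shift ^^ n) -` V \<noteq> {}))"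

text \<open>Shift-invariant Borel probability measures of the system \<open>(X, shift)\<close>:
  Borel probability measures on the full shift, concentrated on \<open>X\<close>.\<close>
definition invariant_measure :: "(nat \<Rightarrow> bool) set \<Rightarrow> (nat \<Rightarrow> bool) measure \<Rightarrow> bool" where
  "invariant_measure X M \<longleftrightarrow>
     sets M = sets borel \<and> prob_space M \<and> emeasure M X = 1 \<and>
     (\<forall>A\<in>sets borel. emeasure M (shift -` A) = emeasure M A)"

definition ergodic_measure :: "(nat \<Rightarrow> bool) set \<Rightarrow> (nat \<Rightarrow> bool) measure \<Rightarrow> bool" where
  "ergodic_measure X M \<longleftrightarrow> invariant_measure X M \<and>
     (\<forall>A\<in>sets borel. shift -` A = A \<longrightarrow> emeasure M A = 0 \<or> emeasure M A = 1)"

definition birkhoff_avg :: "((nat \<Rightarrow> bool) \<Rightarrow> real) \<Rightarrow> (nat \<Rightarrow> bool) \<Rightarrow> nat \<Rightarrow> real" where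
  "birkhoff_avg f x n = (\<Sum>j<n. f ((shift ^^ j) x)) / real n"

text \<open>\<open>x\<close> is generic for \<open>M\<close>: the empirical measures converge weak-* to \<open>M\<close>,
  i.e. the averages of every continuous test function converge to its integral.\<close>
definition generic_point :: "(nat \<Rightarrow> bool) measure \<Rightarrow> (nat \<Rightarrow> bool) \<Rightarrow> bool" where
  "generic_point M x \<longleftrightarrow>
     (\<forall>f :: (nat \<Rightarrow> bool) \<Rightarrow> real. continuous_on UNIV f \<longrightarrow>
        birkhoff_avg f x \<longlonglongrightarrow> integral\<^sup>L M f)"

end

theory Submission
  imports Defs
begin

(* A topologically mixing binary shift whose only ergodic measures are the two Dirac
   measures at the fixed points 0^\<infinity> and 1^\<infinity>, and in which every point is generic for
   one of them.

   The space consists of the sequences x in which every maximal run of ones that follows a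
   gap of length D \<ge> 2 is short: if p < q are consecutive ones with q - p = D \<ge> 2 and the
   ones after q are D-chained up to some one r (consecutive ones at distance \<le> D), then
   (r - q)^2 \<le> D.  So a cluster after a gap of length D has at most about \<surd>D ones and is
   followed by a gap longer than D; gaps grow, and the density of ones tends to zero unless x
   is eventually constantly one. *)

section \<open>Topology of the full shift\<close>

lemma shift_power: "(shift ^^ n) x = (\<lambda>i. x (i + n))"
  by (induction n arbitrary: x) (auto simp: shift_def)

lemma shift_continuous: "continuous_on UNIV shift"
  unfolding shift_def by (intro continuous_on_coordinatewise_then_product continuous_on_product_coordinates)

lemma shift_vimage_borel: "A \<in> sets borel \<Longrightarrow> shift -` A \<in> sets borel"
  using measurable_sets[OF borel_measurable_continuous_onI[OF shift_continuous]] by simp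

lemma open_cylinder: "open {y::nat \<Rightarrow> bool. \<forall>i<k. y i = x i}"
proof -
  have "open {b::bool}" for b
  proof -
    have "{b} = (if b then {False<..} else {..<True})" by (cases b) auto
    then show ?thesis by simp
  qed
  then have "open {f::nat \<Rightarrow> bool. \<forall>i\<in>{..<k}. f (id i) \<in> {x i}}"
    by (intro product_topology_basis') auto
  moreover have "{f::nat \<Rightarrow> bool. \<forall>i\<in>{..<k}. f (id i) \<in> {x i}} = {y. \<forall>i<k. y i = x i}" by auto
  ultimately show ?thesis by simp
qed

lemma open_contains_cylinder:
  fixes U :: "(nat \<Rightarrow> bool) set"
  assumes "open U" "x \<in> U"
  shows "\<exists>k. \<forall>y. (\<forall>i<k. y i = x i) \<longrightarrow> y \<in> U"
proof -
  have "openin (product_topology (\<lambda>i. euclidean) UNIV) U" using assms(1) by (simp add: open_fun_def)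
  from product_topology_open_contains_basis[OF this assms(2)] obtain V where
    V: "x \<in> (\<Pi>\<^sub>E i\<in>UNIV. V i)" "finite {i. V i \<noteq> topspace euclidean}" "(\<Pi>\<^sub>E i\<in>UNIV. V i) \<subseteq> U"
    by blast
  have "finite {i. V i \<noteq> UNIV}" using V(2) by simp
  then obtain k where k: "{i. V i \<noteq> UNIV} \<subseteq> {..<k}" using finite_nat_iff_bounded by blast
  show ?thesis
  proof (intro exI allI impI)
    fix y :: "nat \<Rightarrow> bool" assume y: "\<forall>i<k. y i = x i"
    have "y i \<in> V i" for i
    proof (cases "i < k")
      case True then show ?thesis using y V(1) by (auto simp: PiE_UNIV_domain)
    next
      case False then show ?thesis using k by auto
    qed
    then show "y \<in> U" using V(3) by (auto simp: PiE_UNIV_domain)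
  qed
qed

lemma closed_finitely_determined:
  fixes S :: "(nat \<Rightarrow> bool) set"
  assumes "\<And>x y. \<forall>i<B. x i = y i \<Longrightarrow> x \<in> S \<Longrightarrow> y \<in> S"
  shows "closed S"
  unfolding closed_def
proof (rule topological_space_class.openI)
  fix x assume "x \<in> - S"
  have "{y. \<forall>i<B. y i = x i} \<subseteq> - S"
  proof
    fix y assume "y \<in> {y. \<forall>i<B. y i = x i}"
    then show "y \<in> - S" using assms[of y x] \<open>x \<in> - S\<close> by auto
  qed
  then show "\<exists>T. open T \<and> x \<in> T \<and> T \<subseteq> - S" using open_cylinder[of B x] by blast
qed

lemma compact_full_shift: "compact (UNIV :: (nat \<Rightarrow> bool) set)"
proof -
  have "compact_space (euclidean :: bool topology)"
    unfolding compact_space_def by (simp add: finite_imp_compact)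
  then have "compact_space (product_topology (\<lambda>i::nat. euclidean :: bool topology) UNIV)"
    by (simp add: compact_space_product_topology)
  then have "compact_space (euclidean :: (nat \<Rightarrow> bool) topology)"
    by (simp add: euclidean_product_topology)
  then show ?thesis by (simp add: compact_space_def)
qed

lemma continuous_bounded:
  fixes f :: "(nat \<Rightarrow> bool) \<Rightarrow> real"
  assumes "continuous_on UNIV f"
  shows "\<exists>B. \<forall>y. \<bar>f y\<bar> \<le> B"
proof -
  have "bounded (f ` UNIV)"
    using compact_continuous_image[OF assms compact_full_shift] by (rule compact_imp_bounded)
  then show ?thesis by (auto simp: bounded_iff)
qed

lemma continuous_cylinder_estimate:
  fixes f :: "(nat \<Rightarrow> bool) \<Rightarrow> real"
  assumes "continuous_on UNIV f" "0 < e"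
  shows "\<exists>k. \<forall>y. (\<forall>i<k. y i = z i) \<longrightarrow> \<bar>f y - f z\<bar> < e"
proof -
  have "open (f -` ball (f z) e)" using assms(1) continuous_on_open_vimage[of UNIV f] by auto
  moreover have "z \<in> f -` ball (f z) e" using assms(2) by simp
  ultimately obtain k where "\<forall>y. (\<forall>i<k. y i = z i) \<longrightarrow> y \<in> f -` ball (f z) e"
    using open_contains_cylinder by blast
  then show ?thesis by (auto simp: dist_real_def abs_minus_commute)
qed

lemma closed_coordinate: "closed {x::nat \<Rightarrow> bool. x n = b}"
  by (rule closed_finitely_determined[of "Suc n"]) auto

lemma borel_coordinate: "{x::nat \<Rightarrow> bool. x n} \<in> sets borel"
  using closed_coordinate[of n True] by (simp add: borel_closed)

lemma borel_singleton_sequence: "{z::nat \<Rightarrow> bool} \<in> sets borel"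
proof -
  have "{z} = (\<Inter>n. {x::nat \<Rightarrow> bool. x n = z n})" by auto
  moreover have "closed (\<Inter>n. {x::nat \<Rightarrow> bool. x n = z n})" by (intro closed_INT ballI closed_coordinate)
  ultimately show ?thesis by (simp add: borel_closed)
qed

section \<open>Dirac measures at fixed points and their generic points\<close>

lemma integral_return_continuous:
  fixes f :: "(nat \<Rightarrow> bool) \<Rightarrow> real"
  assumes "continuous_on UNIV f"
  shows "integral\<^sup>L (return borel z) f = f z"
  by (rule integral_return) (auto intro: borel_measurable_continuous_onI[OF assms])

lemma measure_eq_return:
  fixes M :: "(nat \<Rightarrow> bool) measure"
  assumes M: "sets M = sets borel" "prob_space M" and z: "emeasure M {z} = 1"
  shows "M = return borel z"
proof (rule measure_eqI)
  show "sets M = sets (return borel z)" using M by simp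
  interpret prob_space M by (rule M(2))
  have space: "space M = UNIV" using M(1) by (metis sets_eq_imp_space_eq space_borel)
  have z_set: "{z} \<in> sets M" using M(1) borel_singleton_sequence by simp
  fix B assume B: "B \<in> sets M"
  show "emeasure M B = emeasure (return borel z) B"
  proof (cases "z \<in> B")
    case True
    have "emeasure M {z} \<le> emeasure M B" using True B by (intro emeasure_mono) auto
    then show ?thesis using True z B M(1) subprob_emeasure_le_1[of B] by simp
  next
    case False
    have "emeasure M (space M - {z}) = emeasure M (space M) - emeasure M {z}"
      using z_set by (intro emeasure_compl) auto
    then have null: "emeasure M (UNIV - {z}) = 0" using z emeasure_space_1 space by simp
    have "emeasure M B \<le> emeasure M (UNIV - {z})"
      using False B sets.compl_sets[OF z_set] space by (intro emeasure_mono) auto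
    then show ?thesis using null False B M(1) by simp
  qed
qed

lemma ergodic_return_fixed_point:
  assumes "X \<in> sets borel" "z \<in> X" "shift z = z"
  shows "ergodic_measure X (return borel z)"
  unfolding ergodic_measure_def invariant_measure_def
proof (intro conjI ballI impI)
  show "prob_space (return borel z)" by (rule prob_space_return) simp
  show "emeasure (return borel z) X = 1" using assms(1,2) by simp
  fix A :: "(nat \<Rightarrow> bool) set" assume A: "A \<in> sets borel"
  show "emeasure (return borel z) (shift -` A) = emeasure (return borel z) A"
    using A shift_vimage_borel[OF A] assms(3) by (simp add: indicator_def)
  show "emeasure (return borel z) A = 0 \<or> emeasure (return borel z) A = 1"
    using A by (simp add: indicator_def)
qed simp

lemma generic_point_limit:
  assumes "generic_point M x" "continuous_on UNIV f" "birkhoff_avg f x \<longlonglongrightarrow> a"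
  shows "a = integral\<^sup>L M f"
  using assms LIMSEQ_unique unfolding generic_point_def by blast

lemma eventually_fixed_generic:
  assumes N: "\<And>j. N \<le> j \<Longrightarrow> (shift ^^ j) x = z"
  shows "generic_point (return borel z) x"
  unfolding generic_point_def
proof (intro allI impI)
  fix f :: "(nat \<Rightarrow> bool) \<Rightarrow> real" assume f: "continuous_on UNIV f"
  define C where "C = (\<Sum>j<N. f ((shift ^^ j) x) - f z)"
  have avg: "birkhoff_avg f x n = f z + C / real n" if n: "N \<le> n" "0 < n" for n
  proof -
    have "(\<Sum>j<n. f ((shift ^^ j) x) - f z) = C"
      unfolding C_def by (rule sum.mono_neutral_right) (use n N in auto)
    then have "(\<Sum>j<n. f ((shift ^^ j) x)) = real n * f z + C" by (simp add: sum_subtractf)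
    then show ?thesis using n by (simp add: birkhoff_avg_def field_simps)
  qed
  have "(\<lambda>n. f z + C / real n) \<longlonglongrightarrow> f z + 0"
    by (intro tendsto_add tendsto_const lim_const_over_n)
  moreover have "eventually (\<lambda>n. f z + C / real n = birkhoff_avg f x n) sequentially"
    using avg eventually_ge_at_top[of "max N 1"] by (auto elim!: eventually_mono)
  ultimately show "birkhoff_avg f x \<longlonglongrightarrow> integral\<^sup>L (return borel z) f"
    using tendsto_cong integral_return_continuous[OF f] by force
qed

section \<open>Points whose ones have density zero\<close>

definition count_ones :: "(nat \<Rightarrow> bool) \<Rightarrow> nat \<Rightarrow> nat \<Rightarrow> nat" where
  "count_ones x a b = card {i. a \<le> i \<and> i < b \<and> x i}"

definition ones_freq :: "(nat \<Rightarrow> bool) \<Rightarrow> nat \<Rightarrow> real" where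
  "ones_freq x n = real (count_ones x 0 n) / real n"

lemma card_windows_with_ones:
  "card {j. j < n \<and> (\<exists>i<k. x (j + i))} \<le> k * (count_ones x 0 n + k)"
proof -
  have each: "card {j. j < n \<and> x (j + i)} \<le> count_ones x 0 n + k" if "i < k" for i
  proof -
    have "card {j. j < n \<and> x (j + i)} \<le> card {m. m < n + k \<and> x m}"
      by (rule card_inj_on_le[of "\<lambda>j. j + i"]) (use that in \<open>auto simp: inj_on_def\<close>)
    also have "\<dots> \<le> card ({m. m < n \<and> x m} \<union> {n..<n + k})" by (rule card_mono) auto
    also have "\<dots> \<le> card {m. m < n \<and> x m} + card {n..<n + k}" by (rule card_Un_le)
    finally show ?thesis by (simp add: count_ones_def)
  qed
  have "card {j. j < n \<and> (\<exists>i<k. x (j + i))} \<le> card (\<Union>i\<in>{..<k}. {j. j < n \<and> x (j + i)})"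
    by (rule card_mono) auto
  also have "\<dots> \<le> (\<Sum>i\<in>{..<k}. card {j. j < n \<and> x (j + i)})" by (rule card_UN_le) simp
  also have "\<dots> \<le> k * (count_ones x 0 n + k)"
    using sum_bounded_above[of "{..<k}" "\<lambda>i. card {j. j < n \<and> x (j + i)}" "count_ones x 0 n + k"] each
    by simp
  finally show ?thesis .
qed

lemma birkhoff_avg_near_zero_seq:
  fixes f :: "(nat \<Rightarrow> bool) \<Rightarrow> real"
  assumes near: "\<forall>y. (\<forall>i<k. \<not> y i) \<longrightarrow> \<bar>f y - f (\<lambda>_. False)\<bar> < e"
    and bound: "\<forall>y. \<bar>f y - f (\<lambda>_. False)\<bar> \<le> C" and e: "0 < e" and n: "0 < n"
  shows "\<bar>birkhoff_avg f x n - f (\<lambda>_. False)\<bar> \<le> e + C * real (k * (count_ones x 0 n + k)) / real n"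
proof -
  define Bad where "Bad = {j. j < n \<and> (\<exists>i<k. x (j + i))}"
  have C: "0 \<le> C" using bound by (metis abs_ge_zero order.trans)
  have pointwise: "\<bar>f ((shift ^^ j) x) - f (\<lambda>_. False)\<bar> \<le> e + (if j \<in> Bad then C else 0)"
    if "j < n" for j
  proof (cases "j \<in> Bad")
    case True then show ?thesis using bound e by (simp add: add_increasing)
  next
    case False
    then have "\<forall>i<k. \<not> (shift ^^ j) x i" using that by (auto simp: Bad_def shift_power add.commute)
    then show ?thesis using near False by (simp add: less_imp_le)
  qed
  have "\<bar>birkhoff_avg f x n - f (\<lambda>_. False)\<bar> = \<bar>\<Sum>j<n. f ((shift ^^ j) x) - f (\<lambda>_. False)\<bar> / real n"
    using n by (simp add: birkhoff_avg_def sum_subtractf field_simps)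
  also have "\<dots> \<le> (\<Sum>j<n. \<bar>f ((shift ^^ j) x) - f (\<lambda>_. False)\<bar>) / real n"
    by (intro divide_right_mono sum_abs) simp
  also have "\<dots> \<le> (\<Sum>j<n. e + (if j \<in> Bad then C else 0)) / real n"
    by (intro divide_right_mono sum_mono pointwise) auto
  also have "(\<Sum>j<n. e + (if j \<in> Bad then C else 0)) = real n * e + C * real (card Bad)"
  proof -
    have "(\<Sum>j<n. (if j \<in> Bad then C else 0)) = (\<Sum>j\<in>{j\<in>{..<n}. j \<in> Bad}. C)"
      by (rule sum.inter_filter[symmetric]) simp
    also have "{j\<in>{..<n}. j \<in> Bad} = Bad" by (auto simp: Bad_def)
    finally show ?thesis by (simp add: sum.distrib)
  qed
  also have "(real n * e + C * real (card Bad)) / real n \<le> e + C * real (k * (count_ones x 0 n + k)) / real n"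
  proof -
    have "real (card Bad) \<le> real (k * (count_ones x 0 n + k))"
      using card_windows_with_ones[of n k x] by (simp only: Bad_def of_nat_le_iff)
    then have "C * real (card Bad) \<le> C * real (k * (count_ones x 0 n + k))"
      using C by (rule mult_left_mono)
    then show ?thesis using n by (simp add: add_divide_distrib divide_right_mono)
  qed
  finally show ?thesis .
qed

lemma zero_freq_generic:
  assumes freq: "ones_freq x \<longlonglongrightarrow> 0"
  shows "generic_point (return borel (\<lambda>_. False)) x"
  unfolding generic_point_def
proof (intro allI impI)
  fix f :: "(nat \<Rightarrow> bool) \<Rightarrow> real" assume f: "continuous_on UNIV f"
  have "birkhoff_avg f x \<longlonglongrightarrow> f (\<lambda>_. False)"
    unfolding tendsto_iff
  proof (intro allI impI)
    fix e :: real assume e: "0 < e"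
    obtain k where k: "\<forall>y. (\<forall>i<k. \<not> y i) \<longrightarrow> \<bar>f y - f (\<lambda>_. False)\<bar> < e / 2"
      using continuous_cylinder_estimate[OF f, of "e / 2" "\<lambda>_. False"] e by auto
    obtain B where B: "\<forall>y. \<bar>f y\<bar> \<le> B" using continuous_bounded[OF f] by blast
    have bound: "\<forall>y. \<bar>f y - f (\<lambda>_. False)\<bar> \<le> 2 * B"
      using B by (metis abs_triangle_ineq4 add_mono mult_2 order.trans)
    define err where "err n = 2 * B * real k * (ones_freq x n + real k / real n)" for n
    have "err \<longlonglongrightarrow> 2 * B * real k * (0 + 0)"
      unfolding err_def by (intro tendsto_mult tendsto_const tendsto_add freq lim_const_over_n)
    then have "eventually (\<lambda>n. err n < e / 2) sequentially"
      using e by (intro order_tendstoD(2)) auto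
    then show "eventually (\<lambda>n. dist (birkhoff_avg f x n) (f (\<lambda>_. False)) < e) sequentially"
      using eventually_gt_at_top[of 0]
    proof eventually_elim
      case (elim n)
      have "\<bar>birkhoff_avg f x n - f (\<lambda>_. False)\<bar> \<le> e / 2 + 2 * B * real (k * (count_ones x 0 n + k)) / real n"
        using birkhoff_avg_near_zero_seq[OF k bound _ elim(2)] e by simp
      also have "2 * B * real (k * (count_ones x 0 n + k)) / real n = err n"
        by (simp add: err_def ones_freq_def algebra_simps add_divide_distrib)
      finally show ?case using elim(1) by (simp add: dist_real_def)
    qed
  qed
  then show "birkhoff_avg f x \<longlonglongrightarrow> integral\<^sup>L (return borel (\<lambda>_. False)) f"
    using integral_return_continuous[OF f] by simp
qed

section \<open>The example space\<close>

definition gap :: "(nat \<Rightarrow> bool) \<Rightarrow> nat \<Rightarrow> nat \<Rightarrow> bool" where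
  "gap x p q \<longleftrightarrow> p < q \<and> x p \<and> x q \<and> (\<forall>m. p < m \<longrightarrow> m < q \<longrightarrow> \<not> x m)"

definition chained :: "(nat \<Rightarrow> bool) \<Rightarrow> nat \<Rightarrow> nat \<Rightarrow> nat \<Rightarrow> bool" where
  "chained x D q r \<longleftrightarrow> (\<forall>s. q \<le> s \<longrightarrow> s < r \<longrightarrow> (\<exists>t. s < t \<and> t \<le> s + D \<and> x t))"

definition admissible :: "(nat \<Rightarrow> bool) \<Rightarrow> bool" where
  "admissible x \<longleftrightarrow> (\<forall>p q r. gap x p q \<longrightarrow> 2 \<le> q - p \<longrightarrow> q \<le> r \<longrightarrow> x r \<longrightarrow>
     chained x (q - p) q r \<longrightarrow> (r - q) * (r - q) \<le> q - p)"

definition cluster_space :: "(nat \<Rightarrow> bool) set" where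
  "cluster_space = {x. admissible x}"

(* The space is shift invariant: gaps and chains of the shifted sequence are those of x
   moved by one position. *)
lemma admissibleD:
  "admissible x \<Longrightarrow> gap x p q \<Longrightarrow> 2 \<le> q - p \<Longrightarrow> q \<le> r \<Longrightarrow> x r \<Longrightarrow> chained x (q - p) q r \<Longrightarrow>
   (r - q) * (r - q) \<le> q - p"
  unfolding admissible_def by blast

lemma gap_shift:
  assumes g: "gap (shift x) p q"
  shows "gap x (Suc p) (Suc q)"
proof -
  have "\<not> x m" if "Suc p < m" "m < Suc q" for m
    using g that by (cases m) (auto simp: gap_def shift_def)
  then show ?thesis using g by (auto simp: gap_def shift_def)
qed

lemma chained_shift: "chained (shift x) D q r \<Longrightarrow> chained x D (Suc q) (Suc r)"
  unfolding chained_def shift_def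
proof (intro allI impI)
  fix s assume ch: "\<forall>s. q \<le> s \<longrightarrow> s < r \<longrightarrow> (\<exists>t>s. t \<le> s + D \<and> x (Suc t))"
    and s: "Suc q \<le> s" "s < Suc r"
  have "q \<le> s - 1" "s - 1 < r" using s by auto
  then obtain t where "s - 1 < t" "t \<le> s - 1 + D" "x (Suc t)" using ch by blast
  then show "\<exists>t>s. t \<le> s + D \<and> x t" using s by (intro exI[of _ "Suc t"]) auto
qed

lemma admissible_shift:
  assumes x: "admissible x"
  shows "admissible (shift x)"
  unfolding admissible_def
proof (intro allI impI)
  fix p q r
  assume h: "gap (shift x) p q" "2 \<le> q - p" "q \<le> r" "shift x r" "chained (shift x) (q - p) q r"
  have "(Suc r - Suc q) * (Suc r - Suc q) \<le> Suc q - Suc p"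
    by (rule admissibleD[OF x gap_shift[OF h(1)]])
      (use h chained_shift[OF h(5)] in \<open>simp_all add: shift_def\<close>)
  then show "(r - q) * (r - q) \<le> q - p" by simp
qed

lemma shift_power_cluster_space: "x \<in> cluster_space \<Longrightarrow> (shift ^^ m) x \<in> cluster_space"
  by (induction m) (auto simp: cluster_space_def admissible_shift)

(* Whether (p, q) is a gap and whether [q, r) is D-chained depend only on finitely many
   coordinates; hence admissibility is a countable intersection of clopen conditions. *)
lemma gap_local:
  assumes "\<And>i. i \<le> q \<Longrightarrow> x i = y i"
  shows "gap x p q \<longleftrightarrow> gap y p q"
proof -
  have "p < q \<Longrightarrow> x p = y p" "x q = y q" "\<And>m. m < q \<Longrightarrow> x m = y m" using assms by auto
  then show ?thesis by (auto simp: gap_def)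
qed

lemma chained_local:
  assumes "\<And>i. i < r + D \<Longrightarrow> x i = y i"
  shows "chained x D q r \<longleftrightarrow> chained y D q r"
proof -
  have "x t = y t" if "s < r" "t \<le> s + D" for s t
    using that assms[of t] by linarith
  then show ?thesis unfolding chained_def by blast
qed

lemma closed_cluster_space: "closed cluster_space"
proof -
  define C where "C p q r = {x. gap x p q \<longrightarrow> 2 \<le> q - p \<longrightarrow> q \<le> r \<longrightarrow> x r \<longrightarrow>
      chained x (q - p) q r \<longrightarrow> (r - q) * (r - q) \<le> q - p}" for p q r
  have closed_C: "closed (C p q r)" for p q r
  proof (rule closed_finitely_determined[of "r + q + 1"])
    fix x y :: "nat \<Rightarrow> bool" assume agree: "\<forall>i<r + q + 1. x i = y i" and "x \<in> C p q r"
    have "gap x p q = gap y p q" using agree by (intro gap_local) auto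
    moreover have "chained x (q - p) q r = chained y (q - p) q r" using agree by (intro chained_local) auto
    moreover have "x r = y r" using agree by auto
    ultimately show "y \<in> C p q r" using \<open>x \<in> C p q r\<close> by (simp add: C_def)
  qed
  have "cluster_space = (\<Inter>p. \<Inter>q. \<Inter>r. C p q r)"
    by (auto simp: cluster_space_def admissible_def C_def)
  moreover have "closed (\<Inter>p. \<Inter>q. \<Inter>r. C p q r)" by (intro closed_INT ballI closed_C)
  ultimately show ?thesis by simp
qed

lemma shift_space_cluster_space: "shift_space cluster_space"
  unfolding shift_space_def using closed_cluster_space admissible_shift
  by (auto simp: cluster_space_def)

lemma zero_seq_in_cluster_space: "(\<lambda>_. False) \<in> cluster_space"
  by (auto simp: cluster_space_def admissible_def gap_def)

(* In the constant sequence 1 all gaps have length one. *)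
lemma one_seq_in_cluster_space: "(\<lambda>_. True) \<in> cluster_space"
proof -
  have "q - p < 2" if "gap (\<lambda>_. True) p q" for p q
  proof -
    have "\<not> Suc p < q" using that by (auto simp: gap_def)
    then show ?thesis by linarith
  qed
  then show ?thesis by (fastforce simp: cluster_space_def admissible_def)
qed

section \<open>Mixing: gluing two admissible words\<close>

definition glue :: "nat \<Rightarrow> nat \<Rightarrow> (nat \<Rightarrow> bool) \<Rightarrow> (nat \<Rightarrow> bool) \<Rightarrow> nat \<Rightarrow> bool" where
  "glue k n x y i \<longleftrightarrow> (if i < k then x i else n \<le> i \<and> i < n + k \<and> y (i - n))"

lemma glue_ones: "glue k n x y i \<Longrightarrow> i < k \<or> n \<le> i \<and> i < n + k"
  by (auto simp: glue_def split: if_splits)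

(* A cluster in the second word that follows the long gap is short because the gap exceeds k^2. *)
lemma glue_cluster_after_long_gap:
  assumes n: "k * k + 2 * k \<le> n" and p: "p < k" and q: "n \<le> q" and r: "q \<le> r" "glue k n x y r"
  shows "(r - q) * (r - q) \<le> q - p"
proof -
  have "r - q \<le> k" using glue_ones[OF r(2)] r(1) q by linarith
  then have "(r - q) * (r - q) \<le> k * k" by (intro mult_mono) auto
  also have "k * k \<le> q - p" using n p q by linarith
  finally show ?thesis .
qed

(* A cluster starting in the first word cannot reach the second word, so it is a cluster of x. *)
lemma glue_cluster_in_first_word:
  assumes x: "admissible x" and n: "k * k + 2 * k \<le> n"
    and g: "gap (glue k n x y) p q" "2 \<le> q - p" "q < k"
    and r: "q \<le> r" "glue k n x y r" and ch: "chained (glue k n x y) (q - p) q r"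
  shows "(r - q) * (r - q) \<le> q - p"
proof -
  have D: "q - p < k" using g(1,3) by (simp add: gap_def)
  have ones_below: "t < k" if "glue k n x y t" "t < 2 * k" for t
    using glue_ones[OF that(1)] that(2) n by linarith
  have "r < k"
  proof (rule ccontr)
    assume "\<not> r < k"
    then have "q \<le> k - 1" "k - 1 < r" using g(3) by auto
    then obtain t where "k - 1 < t" "t \<le> k - 1 + (q - p)" "glue k n x y t"
      using ch unfolding chained_def by blast
    then show False using ones_below D by fastforce
  qed
  have "chained x (q - p) q r" unfolding chained_def
  proof (intro allI impI)
    fix s assume "q \<le> s" "s < r"
    then obtain t where t: "s < t" "t \<le> s + (q - p)" "glue k n x y t" using ch unfolding chained_def by blast
    then have "t < k" using ones_below \<open>r < k\<close> \<open>s < r\<close> D by fastforce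
    then show "\<exists>t'>s. t' \<le> s + (q - p) \<and> x t'" using t by (auto simp: glue_def)
  qed
  moreover have "gap x p q" using g(1,3) by (auto simp: gap_def glue_def)
  moreover have "x r" using r(2) \<open>r < k\<close> by (simp add: glue_def)
  ultimately show ?thesis using admissibleD[OF x _ g(2) r(1)] by blast
qed

(* A gap inside the second word is a gap of y, moved by n. *)
lemma glue_cluster_in_second_word:
  assumes y: "admissible y" and n: "k * k + 2 * k \<le> n"
    and g: "gap (glue k n x y) p q" "2 \<le> q - p" "n \<le> p"
    and r: "q \<le> r" "glue k n x y r" and ch: "chained (glue k n x y) (q - p) q r"
  shows "(r - q) * (r - q) \<le> q - p"
proof -
  have in_y: "glue k n x y i \<longleftrightarrow> y (i - n) \<and> i < n + k" if "n \<le> i" for i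
    using that n by (auto simp: glue_def)
  have "gap y (p - n) (q - n)" unfolding gap_def
  proof (intro conjI allI impI)
    fix m assume "p - n < m" "m < q - n"
    then have m: "p < m + n" "m + n < q" using g(3) by auto
    have "q < n + k" using glue_ones[of k n x y q] g(1,3) n by (auto simp: gap_def)
    moreover have "\<not> glue k n x y (m + n)" using g(1) m by (auto simp: gap_def)
    ultimately show "\<not> y m" using in_y[of "m + n"] m by simp
  qed (use g in_y in \<open>auto simp: gap_def\<close>)
  moreover have "chained y (q - p) (q - n) (r - n)" unfolding chained_def
  proof (intro allI impI)
    fix s assume "q - n \<le> s" "s < r - n"
    then have "q \<le> s + n" "s + n < r" using g by (auto simp: gap_def)
    then obtain t where t: "s + n < t" "t \<le> s + n + (q - p)" "glue k n x y t"
      using ch unfolding chained_def by blast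
    then show "\<exists>t'>s. t' \<le> s + (q - p) \<and> y t'" using in_y[of t] by (intro exI[of _ "t - n"]) auto
  qed
  moreover have "y (r - n)" using r g in_y[of r] by (auto simp: gap_def)
  moreover have D: "q - n - (p - n) = q - p" using g(1,3) by (simp add: gap_def)
  ultimately have "(r - n - (q - n)) * (r - n - (q - n)) \<le> q - p"
    using admissibleD[OF y, of "p - n" "q - n" "r - n", unfolded D] g(2) r(1) by (simp add: diff_le_mono)
  moreover have "r - n - (q - n) = r - q" using g(1,3) r(1) by (simp add: gap_def)
  ultimately show ?thesis by simp
qed

(* If the zero block is long enough, every cluster of the glued sequence lies in one of the
   two words or follows the long gap between them. *)
lemma admissible_glue:
  assumes x: "admissible x" and y: "admissible y" and n: "k * k + 2 * k \<le> n"
  shows "admissible (glue k n x y)"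
  unfolding admissible_def
proof (intro allI impI)
  fix p q r
  assume g: "gap (glue k n x y) p q" "2 \<le> q - p" and r: "q \<le> r" "glue k n x y r"
    and ch: "chained (glue k n x y) (q - p) q r"
  have "q < k \<or> (p < k \<and> n \<le> q) \<or> n \<le> p"
    using glue_ones[of k n x y p] glue_ones[of k n x y q] g(1) by (auto simp: gap_def)
  then show "(r - q) * (r - q) \<le> q - p"
    using glue_cluster_in_first_word[OF x n g _ r ch] glue_cluster_after_long_gap[OF n _ _ r]
      glue_cluster_in_second_word[OF y n g _ r ch] by blast
qed

(* Any two cylinders are connected at every time n \<ge> k^2 + 2k by a glued point. *)
lemma mixing_cluster_space: "topologically_mixing cluster_space"
  unfolding topologically_mixing_def
proof (intro allI impI)
  fix U V assume UV: "openin (top_of_set cluster_space) U \<and> U \<noteq> {} \<and>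
    openin (top_of_set cluster_space) V \<and> V \<noteq> {}"
  then obtain OU OV where open_UV: "open OU" "U = cluster_space \<inter> OU" "open OV" "V = cluster_space \<inter> OV"
    by (meson openin_open)
  obtain x y where x: "x \<in> U" and y: "y \<in> V" using UV by auto
  obtain k1 where k1: "\<forall>w. (\<forall>i<k1. w i = x i) \<longrightarrow> w \<in> OU"
    using open_contains_cylinder[OF open_UV(1)] x open_UV(2) by blast
  obtain k2 where k2: "\<forall>w. (\<forall>i<k2. w i = y i) \<longrightarrow> w \<in> OV"
    using open_contains_cylinder[OF open_UV(3)] y open_UV(4) by blast
  define k where "k = k1 + k2"
  show "\<exists>N. \<forall>n\<ge>N. U \<inter> (shift ^^ n) -` V \<noteq> {}"
  proof (intro exI allI impI)
    fix n assume n: "k * k + 2 * k \<le> n"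
    define z where "z = glue k n x y"
    have "z \<in> cluster_space"
      using admissible_glue x y n open_UV by (auto simp: z_def cluster_space_def)
    moreover have "z \<in> OU" using k1[rule_format, of z] by (simp add: z_def glue_def k_def)
    moreover have "(shift ^^ n) z \<in> OV"
      using k2[rule_format, of "(shift ^^ n) z"] n by (simp add: z_def glue_def k_def shift_power)
    moreover have "(shift ^^ n) z \<in> cluster_space" using \<open>z \<in> cluster_space\<close> by (rule shift_power_cluster_space)
    ultimately show "U \<inter> (shift ^^ n) -` V \<noteq> {}" using open_UV by auto
  qed
qed

section \<open>Density of ones in the example space\<close>

lemma next_one:
  assumes "x r" "r < i" "x i"
  shows "\<exists>q. gap x r q \<and> q \<le> i"
proof -
  define q where "q = (LEAST j. r < j \<and> x j)"
  have "r < q" "x q" "q \<le> i"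
    using LeastI[of "\<lambda>j. r < j \<and> x j" i] Least_le[of "\<lambda>j. r < j \<and> x j" i] assms(2,3)
    by (auto simp: q_def)
  moreover have "\<not> x m" if "r < m" "m < q" for m
    using not_less_Least[of m "\<lambda>j. r < j \<and> x j"] that by (auto simp: q_def)
  ultimately show ?thesis using assms(1) by (auto simp: gap_def)
qed

lemma cluster_after_gap:
  assumes x: "x \<in> cluster_space" and g: "gap x p q" and D: "2 \<le> q - p"
  shows "\<exists>r. q \<le> r \<and> x r \<and> (r - q) * (r - q) \<le> q - p \<and>
    (\<forall>t. r < t \<longrightarrow> t \<le> r + (q - p) \<longrightarrow> \<not> x t)"
proof -
  define R where "R = {r. q \<le> r \<and> x r \<and> chained x (q - p) q r}"
  have short: "(r - q) * (r - q) \<le> q - p" if "r \<in> R" for r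
    using admissibleD[of x p q r] x g D that by (auto simp: R_def cluster_space_def)
  have "R \<subseteq> {..q + (q - p)}"
  proof
    fix r assume r: "r \<in> R"
    have "r - q \<le> (r - q) * (r - q)" by (cases "r - q") auto
    moreover have "q \<le> r" using r by (simp add: R_def)
    ultimately have "r \<le> q + (q - p)" using short[OF r] by linarith
    then show "r \<in> {..q + (q - p)}" by simp
  qed
  then have fin: "finite R" by (rule finite_subset) auto
  have "q \<in> R" using g by (auto simp: R_def gap_def chained_def)
  define r where "r = Max R"
  have "R \<noteq> {}" using \<open>q \<in> R\<close> by auto
  then have rR: "r \<in> R" using fin by (simp add: r_def)
  have "\<not> x t" if t: "r < t" "t \<le> r + (q - p)" for t
  proof
    assume "x t"
    have "chained x (q - p) q t" unfolding chained_def
    proof (intro allI impI)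
      fix s assume s: "q \<le> s" "s < t"
      show "\<exists>t'>s. t' \<le> s + (q - p) \<and> x t'"
      proof (cases "s < r")
        case True then show ?thesis using rR s(1) by (auto simp: R_def chained_def)
      next
        case False then show ?thesis using s t \<open>x t\<close> by (intro exI[of _ t]) auto
      qed
    qed
    then have "t \<in> R" using \<open>x t\<close> t rR by (auto simp: R_def)
    then have "t \<le> r" using fin by (simp add: r_def)
    then show False using t(1) by simp
  qed
  then show ?thesis using rR short[OF rR] by (auto simp: R_def)
qed

lemma cluster_size_bound:
  fixes a M D :: nat
  assumes "a * a \<le> D" "2 * M * M \<le> D"
  shows "M * (a + 1) \<le> D"
proof (cases "a < 2 * M")
  case True
  then have "M * (a + 1) \<le> M * (2 * M)" by (intro mult_le_mono2) auto
  then show ?thesis using assms(2) by (simp add: mult.assoc mult.left_commute)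
next
  case False
  then have "M * (a + 1) \<le> 2 * M * a" by (simp add: algebra_simps)
  also have "\<dots> \<le> a * a" using False by (intro mult_le_mono1) auto
  finally show ?thesis using assms(1) by simp
qed

lemma count_ones_split:
  assumes "q \<le> r" "\<And>i. r < i \<Longrightarrow> i < q' \<Longrightarrow> \<not> x i"
  shows "count_ones x q n \<le> (r - q + 1) + count_ones x q' n"
proof -
  have "{i. q \<le> i \<and> i < n \<and> x i} \<subseteq> {q..r} \<union> {i. q' \<le> i \<and> i < n \<and> x i}"
  proof
    fix i assume i: "i \<in> {i. q \<le> i \<and> i < n \<and> x i}"
    show "i \<in> {q..r} \<union> {i. q' \<le> i \<and> i < n \<and> x i}"
    proof (cases "i \<le> r")
      case False
      then have "\<not> i < q'" using assms(2)[of i] i by auto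
      then show ?thesis using i by auto
    qed (use i in auto)
  qed
  then have "count_ones x q n \<le> card ({q..r} \<union> {i. q' \<le> i \<and> i < n \<and> x i})"
    unfolding count_ones_def by (rule card_mono[rotated]) auto
  also have "\<dots> \<le> card {q..r} + count_ones x q' n" unfolding count_ones_def by (rule card_Un_le)
  finally show ?thesis using assms(1) by simp
qed

(* Once a gap of length at least 2M^2 has occurred, the ones have density at most 1/M:
   each cluster is short and is followed by an even longer gap. *)
lemma count_ones_after_long_gap:
  assumes x: "x \<in> cluster_space" and M: "1 \<le> M"
  shows "gap x p q \<Longrightarrow> 2 * M * M \<le> q - p \<Longrightarrow> M * count_ones x q n \<le> (n - q) + (q - p)"
proof (induction "n - q" arbitrary: p q rule: less_induct)
  case less
  have "1 \<le> M * M" using M by simp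
  then have D2: "2 \<le> q - p" using less.prems(2) by linarith
  obtain r where r: "q \<le> r" "x r" "(r - q) * (r - q) \<le> q - p"
    and zeros: "\<And>t. r < t \<Longrightarrow> t \<le> r + (q - p) \<Longrightarrow> \<not> x t"
    using cluster_after_gap[OF x less.prems(1) D2] by blast
  have cluster: "M * (r - q + 1) \<le> q - p" using cluster_size_bound[OF r(3) less.prems(2)] .
  show ?case
  proof (cases "\<exists>i. r < i \<and> i < n \<and> x i")
    case False
    then have "count_ones x q n \<le> (r - q + 1) + count_ones x n n"
      by (intro count_ones_split[OF r(1)]) auto
    moreover have "count_ones x n n = 0" by (simp add: count_ones_def)
    ultimately have "count_ones x q n \<le> r - q + 1" by simp
    then have "M * count_ones x q n \<le> M * (r - q + 1)" by (rule mult_le_mono2)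
    then show ?thesis using cluster by linarith
  next
    case True
    then obtain i where i: "r < i" "i < n" "x i" by blast
    obtain q' where g': "gap x r q'" "q' \<le> i" using next_one[OF r(2) i(1) i(3)] by blast
    have far: "r + (q - p) < q'" using zeros[of q'] g'(1) by (auto simp: gap_def not_less[symmetric])
    have IH: "M * count_ones x q' n \<le> (n - q') + (q' - r)"
      using less.hyps[of q' r] g' far less.prems(2) i(2) r(1) by (simp add: gap_def)
    have "count_ones x q n \<le> (r - q + 1) + count_ones x q' n"
      using g'(1) by (intro count_ones_split[OF r(1)]) (auto simp: gap_def)
    then have "M * count_ones x q n \<le> M * (r - q + 1) + M * count_ones x q' n"
      by (metis add_mult_distrib2 mult_le_mono2)
    then show ?thesis using cluster IH g' i(2) r(1) by (simp add: gap_def) linarith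
  qed
qed

lemma gap_around_zero:
  assumes a: "x a" "a < z" and z: "\<not> x z" and b: "z < b" "x b"
  shows "\<exists>p q. gap x p q \<and> 2 \<le> q - p"
proof -
  define p where "p = (GREATEST i. i < z \<and> x i)"
  have p: "p < z" "x p" using GreatestI_nat[of "\<lambda>i. i < z \<and> x i" a z] a by (auto simp: p_def)
  have p_max: "i \<le> p" if "i < z" "x i" for i
    using Greatest_le_nat[of "\<lambda>i. i < z \<and> x i" i z] that by (auto simp: p_def)
  obtain q where q: "gap x p q" using next_one[OF p(2) _ b(2)] p(1) b(1) by auto
  have "z < q"
  proof (rule ccontr)
    assume "\<not> z < q"
    then have "q < z" using z q by (cases "q = z") (auto simp: gap_def)
    then show False using p_max[of q] q by (auto simp: gap_def)
  qed
  then show ?thesis using q p(1) by (intro exI[of _ p] exI[of _ q]) auto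
qed

lemma longer_gap:
  assumes x: "x \<in> cluster_space" and g: "gap x p q" "2 \<le> q - p" and inf: "\<forall>N. \<exists>n\<ge>N. x n"
  shows "\<exists>p' q'. gap x p' q' \<and> q - p < q' - p'"
proof -
  obtain r where r: "x r" and zeros: "\<And>t. r < t \<Longrightarrow> t \<le> r + (q - p) \<Longrightarrow> \<not> x t"
    using cluster_after_gap[OF x g] by blast
  obtain i where "Suc r \<le> i" "x i" using inf by blast
  then obtain q' where g': "gap x r q'" using next_one[of x r i] r by auto
  then have "r + (q - p) < q'" using zeros[of q'] by (auto simp: gap_def not_less[symmetric])
  then show ?thesis using g' by (intro exI[of _ r] exI[of _ q']) auto
qed

lemma arbitrarily_long_gaps:
  assumes x: "x \<in> cluster_space" and inf: "\<forall>N. \<exists>n\<ge>N. x n" and not_ev: "\<not> (\<exists>N. \<forall>n\<ge>N. x n)"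
  shows "\<exists>p q. gap x p q \<and> 2 \<le> q - p \<and> L \<le> q - p"
proof (induction L)
  case 0
  obtain a where a: "x a" using inf by blast
  obtain z where z: "Suc a \<le> z" "\<not> x z" using not_ev by blast
  obtain b where b: "Suc z \<le> b" "x b" using inf by blast
  show ?case using gap_around_zero[OF a _ z(2) _ b(2)] z(1) b(1) by auto
next
  case (Suc L)
  then obtain p q where pq: "gap x p q" "2 \<le> q - p" "L \<le> q - p" by blast
  then obtain p' q' where "gap x p' q'" "q - p < q' - p'" using longer_gap[OF x _ _ inf] by blast
  then show ?case using pq by (intro exI[of _ p'] exI[of _ q']) auto
qed

lemma tendsto_zero_from_bounds:
  fixes c :: "nat \<Rightarrow> nat"
  assumes "\<And>M. 1 \<le> M \<Longrightarrow> \<exists>n0. \<forall>n\<ge>n0. M * c n \<le> 2 * n"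
  shows "(\<lambda>n. real (c n) / real n) \<longlonglongrightarrow> 0"
  unfolding LIMSEQ_iff
proof (intro allI impI)
  fix e :: real assume e: "0 < e"
  define M where "M = nat (ceiling (2 / e)) + 1"
  have M: "1 \<le> M" "2 / e < real M" unfolding M_def by linarith+
  obtain n0 where n0: "\<forall>n\<ge>n0. M * c n \<le> 2 * n" using assms[OF M(1)] by blast
  show "\<exists>no. \<forall>n\<ge>no. norm (real (c n) / real n - 0) < e"
  proof (intro exI allI impI)
    fix n assume n: "n \<ge> max n0 1"
    then have "real M * real (c n) \<le> 2 * real n"
      using n0 by (metis max.boundedE of_nat_le_iff of_nat_mult of_nat_numeral)
    then have "real (c n) / real n \<le> 2 / real M" using n M(1) by (simp add: field_simps)
    also have "\<dots> < e" using M e by (simp add: field_simps)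
    finally show "norm (real (c n) / real n - 0) < e" by simp
  qed
qed

lemma cluster_space_zero_freq:
  assumes x: "x \<in> cluster_space" and not_ev: "\<not> (\<exists>N. \<forall>n\<ge>N. x n)"
  shows "ones_freq x \<longlonglongrightarrow> 0"
proof -
  have "\<exists>n0. \<forall>n\<ge>n0. M * count_ones x 0 n \<le> 2 * n" if M: "1 \<le> M" for M
  proof (cases "\<forall>N. \<exists>n\<ge>N. x n")
    case False
    then obtain N where N: "\<And>n. N \<le> n \<Longrightarrow> \<not> x n" by (meson not_less)
    have "count_ones x 0 n \<le> N" for n
    proof -
      have "{i. 0 \<le> i \<and> i < n \<and> x i} \<subseteq> {..<N}" using N by (auto simp: not_less[symmetric])
      then show ?thesis unfolding count_ones_def by (metis card_lessThan card_mono finite_lessThan)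
    qed
    then have bound: "M * count_ones x 0 n \<le> M * N" for n by (rule mult_le_mono2)
    show ?thesis
    proof (intro exI allI impI)
      fix n assume "M * N \<le> n"
      then show "M * count_ones x 0 n \<le> 2 * n" using bound[of n] by linarith
    qed
  next
    case True
    obtain p q where pq: "gap x p q" "2 * M * M \<le> q - p"
      using arbitrarily_long_gaps[OF x True not_ev] by blast
    have "count_ones x 0 n \<le> q + count_ones x q n" for n
      using count_ones_split[of 0 "q - 1" q x n] pq(1) by (auto simp: gap_def)
    then have start: "M * count_ones x 0 n \<le> M * q + M * count_ones x q n" for n
      by (metis add_mult_distrib2 mult_le_mono2)
    have rest: "M * count_ones x q n \<le> (n - q) + (q - p)" for n
      by (rule count_ones_after_long_gap[OF x M pq])
    show ?thesis
    proof (intro exI allI impI)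
      fix n assume "M * q + (q - p) \<le> n"
      then show "M * count_ones x 0 n \<le> 2 * n" using start[of n] rest[of n] by linarith
    qed
  qed
  then have "(\<lambda>n. real (count_ones x 0 n) / real n) \<longlonglongrightarrow> 0" by (rule tendsto_zero_from_bounds)
  then show ?thesis by (simp add: ones_freq_def[abs_def])
qed

section \<open>The ergodic measures of the example space\<close>

definition ones_from :: "nat \<Rightarrow> (nat \<Rightarrow> bool) set" where
  "ones_from N = {x. \<forall>n\<ge>N. x n}"

definition eventually_one :: "(nat \<Rightarrow> bool) set" where
  "eventually_one = (\<Union>N. ones_from N)"

lemma borel_ones_from: "ones_from N \<in> sets borel"
proof -
  have "ones_from N = (\<Inter>n\<in>{N..}. {x::nat \<Rightarrow> bool. x n = True})" by (auto simp: ones_from_def)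
  moreover have "closed (\<Inter>n\<in>{N..}. {x::nat \<Rightarrow> bool. x n = True})"
    by (intro closed_INT ballI closed_coordinate)
  ultimately show ?thesis by (simp add: borel_closed)
qed

lemma borel_eventually_one: "eventually_one \<in> sets borel"
  unfolding eventually_one_def using borel_ones_from by (intro sets.countable_UN) auto

lemma shift_vimage_ones_from: "shift -` ones_from N = ones_from (Suc N)"
proof
  show "shift -` ones_from N \<subseteq> ones_from (Suc N)"
  proof
    fix x assume x: "x \<in> shift -` ones_from N"
    have "x n" if "Suc N \<le> n" for n
      using x that by (cases n) (auto simp: ones_from_def shift_def)
    then show "x \<in> ones_from (Suc N)" by (simp add: ones_from_def)
  qed
qed (auto simp: ones_from_def shift_def)

lemma shift_vimage_eventually_one: "shift -` eventually_one = eventually_one"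
proof -
  have mono: "ones_from N \<subseteq> ones_from (Suc N)" for N by (auto simp: ones_from_def)
  have "shift -` eventually_one = (\<Union>N. ones_from (Suc N))"
    by (simp add: eventually_one_def vimage_UN shift_vimage_ones_from)
  also have "\<dots> = eventually_one" unfolding eventually_one_def using mono by blast
  finally show ?thesis .
qed

(* Under an invariant measure, eventually-one sequences carry exactly the mass of the fixed
   point 1^\<infinity>: the increasing sets ones_from N all have the mass of ones_from 0 = {1^\<infinity>}. *)
lemma invariant_measure_eventually_one:
  assumes inv: "invariant_measure X M"
  shows "emeasure M eventually_one = emeasure M {\<lambda>_. True}"
proof -
  have sM: "sets M = sets borel"
    and shift_inv: "\<And>A. A \<in> sets borel \<Longrightarrow> emeasure M (shift -` A) = emeasure M A"
    using inv by (auto simp: invariant_measure_def)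
  have same: "emeasure M (ones_from N) = emeasure M {\<lambda>_. True}" for N
  proof (induction N)
    case 0
    have "ones_from 0 = {\<lambda>_. True}" by (auto simp: ones_from_def)
    then show ?case by simp
  next
    case (Suc N)
    then show ?case using shift_inv[OF borel_ones_from[of N]] by (simp add: shift_vimage_ones_from)
  qed
  have "range ones_from \<subseteq> sets M" using borel_ones_from sM by auto
  moreover have "incseq ones_from" unfolding incseq_def ones_from_def by auto
  ultimately have "(SUP N. emeasure M (ones_from N)) = emeasure M eventually_one"
    unfolding eventually_one_def by (rule SUP_emeasure_incseq)
  then show ?thesis unfolding same by simp
qed

lemma ones_freq_indicator_sum: "ones_freq x n = (\<Sum>j<n. indicator {y. y j} x) / real n"
proof -
  have "(\<Sum>j<n. indicator {y. y j} x :: real) = (\<Sum>j<n. if x j then 1 else 0)"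
    by (simp add: indicator_def of_bool_def)
  also have "\<dots> = (\<Sum>j\<in>{j\<in>{..<n}. x j}. 1)" by (rule sum.inter_filter[symmetric]) simp
  also have "\<dots> = real (card {j\<in>{..<n}. x j})" by simp
  also have "{j\<in>{..<n}. x j} = {i. 0 \<le> i \<and> i < n \<and> x i}" by auto
  finally have "(\<Sum>j<n. indicator {y. y j} x :: real) = real (count_ones x 0 n)"
    unfolding count_ones_def .
  then show ?thesis by (simp add: ones_freq_def)
qed

lemma ones_freq_bounds: "0 \<le> ones_freq x n \<and> ones_freq x n \<le> 1"
proof -
  have "count_ones x 0 n \<le> card {..<n}" unfolding count_ones_def by (rule card_mono) auto
  then show ?thesis by (cases "n = 0") (auto simp: ones_freq_def divide_le_eq_1)
qed

lemma invariant_measure_coordinate: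
  assumes inv: "invariant_measure X M"
  shows "measure M {y. y j} = measure M {y. y 0}"
proof (induction j)
  case (Suc j)
  have "shift -` {y. y j} = {y. y (Suc j)}" by (auto simp: shift_def)
  then have "emeasure M {y. y (Suc j)} = emeasure M (shift -` {y. y j})" by simp
  also have "\<dots> = emeasure M {y. y j}"
    using inv borel_coordinate[of j] unfolding invariant_measure_def by blast
  finally show ?case using Suc by (simp add: measure_def)
qed simp

lemma integral_ones_freq_invariant:
  assumes inv: "invariant_measure X M"
  shows "integral\<^sup>L M (\<lambda>x. ones_freq x (Suc n)) = measure M {y. y 0}"
proof -
  have sM: "sets M = sets borel" and pM: "prob_space M" using inv by (auto simp: invariant_measure_def)
  interpret prob_space M by (rule pM)
  have space: "space M = UNIV" using sM by (metis sets_eq_imp_space_eq space_borel)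
  have "integral\<^sup>L M (\<lambda>x. \<Sum>j<Suc n. indicator {y. y j} x :: real) =
      (\<Sum>j<Suc n. integral\<^sup>L M (indicator {y. y j}))"
    by (rule Bochner_Integration.integral_sum) (use borel_coordinate sM in \<open>auto simp: emeasure_eq_measure\<close>)
  also have "\<dots> = real (Suc n) * measure M {y. y 0}"
  proof -
    have "integral\<^sup>L M (indicator {y. y j}) = measure M {y. y 0}" for j
      using invariant_measure_coordinate[OF inv, of j] space borel_coordinate[of j] sM by simp
    then show ?thesis by simp
  qed
  finally show ?thesis by (simp add: ones_freq_indicator_sum)
qed

(* An invariant measure under which almost every point has density-zero ones is the Dirac
   measure at 0^\<infinity>: by dominated convergence the (constant) integrals of the frequencies
   tend to 0, so no coordinate is ever one. *)
lemma invariant_measure_zero_freq: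
  assumes inv: "invariant_measure X M" and ae: "AE x in M. ones_freq x \<longlonglongrightarrow> 0"
  shows "M = return borel (\<lambda>_. False)"
proof -
  have sM: "sets M = sets borel" and pM: "prob_space M" using inv by (auto simp: invariant_measure_def)
  interpret prob_space M by (rule pM)
  have space: "space M = UNIV" using sM by (metis sets_eq_imp_space_eq space_borel)
  have "(\<lambda>n. integral\<^sup>L M (\<lambda>x. ones_freq x n)) \<longlonglongrightarrow> integral\<^sup>L M (\<lambda>x. 0)"
  proof (rule integral_dominated_convergence[where w="\<lambda>_. 1"])
    show "(\<lambda>x. ones_freq x n) \<in> borel_measurable M" for n
      unfolding ones_freq_indicator_sum using borel_coordinate sM
      by (intro borel_measurable_divide borel_measurable_sum borel_measurable_indicator) auto
    show "AE x in M. norm (ones_freq x n) \<le> 1" for n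
      by (rule AE_I2) (use ones_freq_bounds in auto)
  qed (use ae in auto)
  then have "(\<lambda>n. integral\<^sup>L M (\<lambda>x. ones_freq x (Suc n))) \<longlonglongrightarrow> 0" using LIMSEQ_Suc by force
  then have "measure M {y. y 0} = 0"
    using integral_ones_freq_invariant[OF inv] by (simp add: LIMSEQ_const_iff)
  then have "emeasure M {y. y j} = 0" for j
    using invariant_measure_coordinate[OF inv, of j] by (simp add: emeasure_eq_measure)
  then have "emeasure M (\<Union>j. {y. y j}) = 0"
    using borel_coordinate sM by (intro emeasure_UN_eq_0) auto
  moreover have "(\<Union>j. {y::nat \<Rightarrow> bool. y j}) = space M - {\<lambda>_. False}" using space by (auto simp: fun_eq_iff)
  ultimately have "emeasure M {\<lambda>_. False} = 1"
    using borel_singleton_sequence sM prob_compl[of "{\<lambda>_. False}"] by (simp add: emeasure_eq_measure)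
  then show ?thesis using sM pM by (intro measure_eq_return)
qed

(* The space has exactly the two ergodic measures at its fixed points: by ergodicity the
   invariant set of eventually-one sequences is full (the measure is the Dirac measure at 1^\<infinity>)
   or null (almost every point has density-zero ones). *)
lemma ergodic_measures_cluster_space:
  assumes erg: "ergodic_measure cluster_space M"
  shows "M = return borel (\<lambda>_. False) \<or> M = return borel (\<lambda>_. True)"
proof -
  have inv: "invariant_measure cluster_space M" and sM: "sets M = sets borel" and pM: "prob_space M"
    and in_X: "emeasure M cluster_space = 1"
    and zero_one: "emeasure M eventually_one = 0 \<or> emeasure M eventually_one = 1"
    using erg borel_eventually_one shift_vimage_eventually_one
    by (auto simp: ergodic_measure_def invariant_measure_def)
  interpret prob_space M by (rule pM)
  show ?thesis
  proof (cases "emeasure M eventually_one = 1")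
    case True
    then show ?thesis using invariant_measure_eventually_one[OF inv] sM pM measure_eq_return by simp
  next
    case False
    then have null: "emeasure M eventually_one = 0" using zero_one by simp
    have "AE x in M. x \<in> cluster_space"
      using in_X closed_cluster_space sM by (simp add: AE_in_set_eq_1 borel_closed emeasure_eq_measure)
    moreover have "AE x in M. x \<notin> eventually_one"
      using null borel_eventually_one sM by (intro AE_not_in) (auto simp: null_sets_def)
    ultimately have "AE x in M. ones_freq x \<longlonglongrightarrow> 0"
      by eventually_elim (auto simp: eventually_one_def ones_from_def intro: cluster_space_zero_freq)
    then show ?thesis using invariant_measure_zero_freq[OF inv] by simp
  qed
qed

lemma cluster_space_generic:
  assumes x: "x \<in> cluster_space"
  shows "generic_point (return borel (\<lambda>_. False)) x \<or> generic_point (return borel (\<lambda>_. True)) x"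
proof (cases "\<exists>N. \<forall>n\<ge>N. x n")
  case True
  then obtain N where "\<forall>n\<ge>N. x n" by blast
  then have "(shift ^^ j) x = (\<lambda>_. True)" if "N \<le> j" for j using that by (auto simp: shift_power)
  then show ?thesis using eventually_fixed_generic by blast
next
  case False
  then show ?thesis using zero_freq_generic cluster_space_zero_freq x by blast
qed

(* The continuous test function reading the first symbol separates the two Dirac measures. *)
definition first_symbol :: "(nat \<Rightarrow> bool) \<Rightarrow> real" where
  "first_symbol y = (if y 0 then 1 else 0)"

lemma continuous_first_symbol: "continuous_on UNIV first_symbol"
proof -
  have "continuous_on UNIV ((\<lambda>b::bool. if b then 1 else 0 :: real) \<circ> (\<lambda>y::nat \<Rightarrow> bool. y 0))"
    by (rule continuous_on_compose) auto
  then show ?thesis by (simp add: first_symbol_def o_def)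
qed

lemma integral_first_symbol: "integral\<^sup>L (return borel (\<lambda>_. b)) first_symbol = (if b then 1 else 0)"
  using integral_return_continuous[OF continuous_first_symbol] by (simp add: first_symbol_def)

theorem mainTheorem20:
  shows "\<exists>X \<mu>1 \<mu>2. shift_space X \<and> topologically_mixing X \<and>
     \<mu>1 \<noteq> \<mu>2 \<and> ergodic_measure X \<mu>1 \<and> ergodic_measure X \<mu>2 \<and>
     (\<forall>M. ergodic_measure X M \<longrightarrow> M = \<mu>1 \<or> M = \<mu>2) \<and>
     (\<forall>x\<in>X. generic_point \<mu>1 x \<or> generic_point \<mu>2 x) \<and>
     (\<forall>t::real. 0 < t \<and> t < 1 \<longrightarrow>
        \<not> (\<exists>x\<in>X. \<forall>f :: (nat \<Rightarrow> bool) \<Rightarrow> real. continuous_on UNIV f \<longrightarrow>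
              birkhoff_avg f x \<longlonglongrightarrow>
                t * integral\<^sup>L \<mu>1 f + (1 - t) * integral\<^sup>L \<mu>2 f))"
proof -
  let ?\<mu>0 = "return borel (\<lambda>_::nat. False)" and ?\<mu>1 = "return borel (\<lambda>_::nat. True)"
  have "(\<lambda>_. b) \<in> cluster_space" for b
    using zero_seq_in_cluster_space one_seq_in_cluster_space by (cases b) auto
  then have ergodic: "ergodic_measure cluster_space (return borel (\<lambda>_. b))" for b
    using closed_cluster_space by (intro ergodic_return_fixed_point) (auto simp: borel_closed shift_def)
  have distinct: "?\<mu>0 \<noteq> ?\<mu>1"
  proof
    assume "?\<mu>0 = ?\<mu>1"
    then have "integral\<^sup>L ?\<mu>0 first_symbol = integral\<^sup>L ?\<mu>1 first_symbol"
      by (rule arg_cong)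
    then show False using integral_first_symbol[of False] integral_first_symbol[of True] by simp
  qed
  (* Tested against the first symbol, a generic point of the mixture would have averages
     tending to 1 - t, whereas generic points of the two Dirac measures give 0 or 1. *)
  have no_mixture: "\<not> birkhoff_avg first_symbol x \<longlonglongrightarrow>
      t * integral\<^sup>L ?\<mu>0 first_symbol + (1 - t) * integral\<^sup>L ?\<mu>1 first_symbol"
    if "0 < t" "t < 1" "x \<in> cluster_space" for t x
    using cluster_space_generic[OF that(3)] generic_point_limit[OF _ continuous_first_symbol]
      integral_first_symbol that(1,2) by fastforce
  show ?thesis
    using shift_space_cluster_space mixing_cluster_space distinct ergodic[of False] ergodic[of True]
      ergodic_measures_cluster_space cluster_space_generic no_mixture continuous_first_symbol
    by (intro exI[of _ cluster_space] exI[of _ ?\<mu>0] exI[of _ ?\<mu>1]) blast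
qed

end
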